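(* For every positive integer $n$ there are vectors $v,w\in E_8$ with $\langle v,v\rangle=\langle w,w\rangle=2n$ and $\langle v,w\rangle=2n-1$.
   Context: $E_8$ denotes the unique even unimodular positive definite lattice of rank $8$, with bilinear form $\langle\cdot,\cdot\rangle$. *)

theory Defs
  imports "HOL-Analysis.Analysis" "HOL-Library.Numeral_Type"
begin

text \<open>This is the (up to isometry unique) even unimodular positive definite lattice
of rank 8.\<close>

definition E8 :: "(real^8) set" where
  "E8 = {x. ((\<forall>i. x $ i \<in> \<int>) \<or> (\<forall>i. x $ i - 1/2 \<in> \<int>))
            \<and> (\<exists>k::int. (\<Sum>i\<in>UNIV. x $ i) = 2 * of_int k)}"

definition E8_form :: "real^8 \<Rightarrow> real^8 \<Rightarrow> real" where
  "E8_form v w = v \<bullet> w"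

end

theory Submission
  imports Defs "HOL-Computational_Algebra.Primes" "HOL-Library.Centered_Division"
begin

text \<open>By Lagrange's four-square theorem \<open>2n - 1 = a\<^sup>2 + b\<^sup>2 + c\<^sup>2 + d\<^sup>2\<close>. With
  \<open>u = (0, 0, a, b, c, d, 0, 0)\<close>, \<open>v = e\<^sub>1 + u\<close> and \<open>w = u - e\<^sub>2\<close> we get
  \<open>\<langle>v, v\<rangle> = \<langle>w, w\<rangle> = 2n\<close> and \<open>\<langle>v, w\<rangle> = 2n - 1\<close>. Both vectors are integral, and their
  coordinate sums \<open>a + b + c + d \<plusminus> 1\<close> are even because \<open>a + b + c + d \<equiv> a\<^sup>2 + b\<^sup>2 + c\<^sup>2 + d\<^sup>2\<close>
  is odd, so both lie in \<open>E\<^sub>8\<close>.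
  Lagrange's theorem is proved along Euler's route: sums of four squares are closed under
  products, and a prime \<open>p\<close> is reached by descent from a multiple \<open>m p\<close> with \<open>m < p\<close>.\<close>

definition sum_of_four_squares :: "int \<Rightarrow> bool" where
  "sum_of_four_squares n \<longleftrightarrow> (\<exists>a b c d. n = a^2 + b^2 + c^2 + d^2)"

lemma euler_four_square_identity:
  fixes a b c d A B C D :: "'a :: comm_ring_1"
  shows "(a^2 + b^2 + c^2 + d^2) * (A^2 + B^2 + C^2 + D^2) =
    (a*A + b*B + c*C + d*D)^2 + (a*B - b*A + c*D - d*C)^2 +
    (a*C - b*D - c*A + d*B)^2 + (a*D + b*C - c*B - d*A)^2"
  by (simp add: power2_eq_square algebra_simps)

lemma sum_of_four_squares_mult:
  "sum_of_four_squares x \<Longrightarrow> sum_of_four_squares y \<Longrightarrow> sum_of_four_squares (x * y)"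
  unfolding sum_of_four_squares_def by (metis euler_four_square_identity)

lemma square_mod_prime_inj_on:
  fixes p h :: int
  assumes "prime p" "2 * h < p"
  shows "inj_on (\<lambda>x. x^2 mod p) {0..h}"
proof (rule inj_onI)
  fix x y assume x: "x \<in> {0..h}" and y: "y \<in> {0..h}" and "x^2 mod p = y^2 mod p"
  then have "p dvd (x - y) * (x + y)"
    by (simp add: mod_eq_dvd_iff power2_eq_square algebra_simps)
  then have "p dvd x - y \<or> p dvd x + y"
    using assms(1) by (simp add: prime_dvd_mult_iff)
  moreover have "\<bar>x - y\<bar> < p" "\<bar>x + y\<bar> < p"
    using x y assms(2) by auto
  ultimately have "x - y = 0 \<or> x + y = 0"
    using dvd_imp_le_int[of "x - y" p] dvd_imp_le_int[of "x + y" p] assms(1)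
    by (auto dest: prime_gt_0_int)
  then show "x = y" using x y by auto
qed

text \<open>Pigeonhole: for \<open>0 \<le> x, y \<le> (p - 1) / 2\<close> the residues of \<open>x\<^sup>2\<close> are pairwise distinct, and so
  are those of \<open>-1 - y\<^sup>2\<close>; the two families have \<open>p + 1\<close> members in total, so they meet.\<close>
lemma odd_prime_dvd_sum_two_squares_plus_one:
  fixes p :: int
  assumes p: "prime p" and "odd p"
  obtains x y where "0 \<le> x" "2 * x < p" "0 \<le> y" "2 * y < p" "p dvd x^2 + y^2 + 1"
proof -
  define h where "h = (p - 1) div 2"
  have hp: "2 * h + 1 = p" using \<open>odd p\<close> unfolding h_def by (auto elim!: oddE)
  define S where "S = (\<lambda>x. x^2 mod p) ` {0..h}"
  define T where "T = (\<lambda>y. (-1 - y^2) mod p) ` {0..h}"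
  have inj_T: "inj_on (\<lambda>y. (-1 - y^2) mod p) {0..h}"
  proof (rule inj_onI)
    fix x y assume "x \<in> {0..h}" "y \<in> {0..h}" "(-1 - x^2) mod p = (-1 - y^2) mod p"
    moreover from this have "x^2 mod p = y^2 mod p"
      by (simp add: mod_eq_dvd_iff) (metis dvd_minus_iff minus_diff_eq)
    ultimately show "x = y"
      using square_mod_prime_inj_on[OF p, of h] hp by (auto dest: inj_onD)
  qed
  have "card S = h + 1" "card T = h + 1"
    unfolding S_def T_def
    using card_image[OF square_mod_prime_inj_on[OF p, of h]] card_image[OF inj_T] hp
      prime_ge_2_int[OF p] by auto
  moreover have "S \<union> T \<subseteq> {0..<p}"
    unfolding S_def T_def using prime_gt_0_int[OF p] by auto
  then have "card (S \<union> T) \<le> p"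
    using card_mono[of "{0..<p}" "S \<union> T"] prime_gt_0_int[OF p] by simp
  moreover have "finite S" "finite T" unfolding S_def T_def by auto
  ultimately have "S \<inter> T \<noteq> {}"
    using card_Un_disjoint[of S T] hp by fastforce
  then obtain x y where xy: "x \<in> {0..h}" "y \<in> {0..h}" "x^2 mod p = (-1 - y^2) mod p"
    unfolding S_def T_def by (auto simp del: atLeastAtMost_iff)
  from xy(3) have "p dvd x^2 + y^2 + 1"
    by (simp add: mod_eq_dvd_iff) (metis diff_minus_eq_add dvd_minus_iff minus_diff_eq
        add.assoc diff_diff_eq2 uminus_add_conv_diff)
  with xy(1,2) hp show thesis by (intro that) auto
qed

lemma sum_of_four_squares_quotient:
  fixes m p r a b c d A B C D :: int
  assumes "m \<noteq> 0" and sum: "m * p = a^2 + b^2 + c^2 + d^2" and res: "A^2 + B^2 + C^2 + D^2 = m * r"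
    and "m dvd a - A" "m dvd b - B" "m dvd c - C" "m dvd d - D"
  shows "sum_of_four_squares (r * p)"
proof -
  obtain u1 u2 u3 u4 where u: "a = A + m * u1" "b = B + m * u2" "c = C + m * u3" "d = D + m * u4"
    using assms(4-7) by (metis dvdE diff_add_cancel add.commute)
  define q1 where "q1 = r + u1 * A + u2 * B + u3 * C + u4 * D"
  define q2 where "q2 = u1 * B - u2 * A + u3 * D - u4 * C"
  define q3 where "q3 = u1 * C - u2 * D - u3 * A + u4 * B"
  define q4 where "q4 = u1 * D + u2 * C - u3 * B - u4 * A"
  have "a * A + b * B + c * C + d * D = m * q1"
    unfolding q1_def using res u by (simp add: power2_eq_square algebra_simps)
  moreover have "a * B - b * A + c * D - d * C = m * q2"
    "a * C - b * D - c * A + d * B = m * q3" "a * D + b * C - c * B - d * A = m * q4"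
    unfolding q2_def q3_def q4_def u by (simp_all add: algebra_simps)
  ultimately have "(m * p) * (m * r) = (m * q1)^2 + (m * q2)^2 + (m * q3)^2 + (m * q4)^2"
    using euler_four_square_identity[of a b c d A B C D] sum res by simp
  then have "m^2 * (r * p) = m^2 * (q1^2 + q2^2 + q3^2 + q4^2)"
    by (simp add: power2_eq_square algebra_simps)
  then show ?thesis
    unfolding sum_of_four_squares_def using \<open>m \<noteq> 0\<close> by auto
qed

lemma square_of_half_modulus_residue:
  fixes m a A :: int
  assumes "m dvd a - A" "4 * A^2 = m^2"
  obtains e where "4 * a^2 = m^2 * (4 * e + 1)"
proof -
  obtain t where t: "a = A + m * t" using assms(1) by (metis dvdE diff_add_cancel add.commute)
  from assms(2) have "(2 * A - m) * (2 * A + m) = 0"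
    by (simp add: power2_eq_square algebra_simps)
  then have "2 * A = m \<or> 2 * A = -m" by auto
  then obtain k where k: "2 * a = m * (2 * k + 1)"
  proof
    assume "2 * A = m"
    then have "2 * a = m * (2 * t + 1)" unfolding t by (simp add: algebra_simps)
    then show thesis by (rule that)
  next
    assume "2 * A = -m"
    then have "2 * a = m * (2 * (t - 1) + 1)" unfolding t by (simp add: algebra_simps)
    then show thesis by (rule that)
  qed
  have "4 * a^2 = m^2 * (2 * k + 1)^2"
    using arg_cong[OF k, of "\<lambda>x. x^2"] by (simp add: power_mult_distrib)
  also have "\<dots> = m^2 * (4 * (k^2 + k) + 1)"
    by (simp add: power2_eq_square algebra_simps)
  finally show thesis by (rule that)
qed

lemma dvd_of_half_modulus_residues:
  fixes m p a b c d A B C D :: int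
  assumes "m \<noteq> 0" and sum: "m * p = a^2 + b^2 + c^2 + d^2"
    and cong: "m dvd a - A" "m dvd b - B" "m dvd c - C" "m dvd d - D"
    and half: "4 * A^2 = m^2" "4 * B^2 = m^2" "4 * C^2 = m^2" "4 * D^2 = m^2"
  shows "m dvd p"
proof -
  obtain e1 where "4 * a^2 = m^2 * (4 * e1 + 1)"
    using square_of_half_modulus_residue[OF cong(1) half(1)] .
  moreover obtain e2 where "4 * b^2 = m^2 * (4 * e2 + 1)"
    using square_of_half_modulus_residue[OF cong(2) half(2)] .
  moreover obtain e3 where "4 * c^2 = m^2 * (4 * e3 + 1)"
    using square_of_half_modulus_residue[OF cong(3) half(3)] .
  moreover obtain e4 where "4 * d^2 = m^2 * (4 * e4 + 1)"
    using square_of_half_modulus_residue[OF cong(4) half(4)] .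
  ultimately have "4 * (m * p) = 4 * (m * (m * (e1 + e2 + e3 + e4 + 1)))"
    using sum by (simp add: power2_eq_square algebra_simps)
  then show ?thesis using \<open>m \<noteq> 0\<close> by simp
qed

lemma dvd_sum_of_four_squares_of_congruent:
  fixes m a b c d A B C D :: int
  assumes "m dvd a - A" "m dvd b - B" "m dvd c - C" "m dvd d - D"
    and "m dvd a^2 + b^2 + c^2 + d^2"
  shows "m dvd A^2 + B^2 + C^2 + D^2"
proof -
  have square_cong: "m dvd x^2 - X^2" if "m dvd x - X" for x X :: int
  proof -
    have "x^2 - X^2 = (x - X) * (x + X)" by (simp add: power2_eq_square algebra_simps)
    then show ?thesis using that by simp
  qed
  have "(a^2 + b^2 + c^2 + d^2) - (A^2 + B^2 + C^2 + D^2) =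
    (a^2 - A^2) + (b^2 - B^2) + (c^2 - C^2) + (d^2 - D^2)" by simp
  then have "m dvd (a^2 + b^2 + c^2 + d^2) - (A^2 + B^2 + C^2 + D^2)"
    using square_cong[OF assms(1)] square_cong[OF assms(2)] square_cong[OF assms(3)]
      square_cong[OF assms(4)] by (simp only: dvd_add)
  with assms(5) have "m dvd (a^2 + b^2 + c^2 + d^2) - ((a^2 + b^2 + c^2 + d^2) - (A^2 + B^2 + C^2 + D^2))"
    by (rule dvd_diff)
  then show ?thesis by (simp add: add.assoc)
qed

lemma four_times_square_cmod_le: "m \<noteq> 0 \<Longrightarrow> 4 * (a cmod m)^2 \<le> m^2"
proof -
  assume "m \<noteq> 0"
  then have "\<bar>2 * (a cmod m)\<bar> \<le> \<bar>m\<bar>" using abs_cmod_less_equal[of m a] by linarith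
  then have "\<bar>2 * (a cmod m)\<bar>^2 \<le> \<bar>m\<bar>^2" by (intro power_mono) auto
  then show ?thesis by (simp add: power_mult_distrib)
qed

text \<open>Euler's descent: replacing \<open>a, b, c, d\<close> by their centred residues modulo \<open>m\<close> yields
  \<open>r p\<close> with \<open>0 < r < m\<close>; the extreme values \<open>r = 0\<close> and \<open>r = m\<close> would force \<open>m\<close> to divide \<open>p\<close>.\<close>
lemma four_squares_descent:
  fixes p m :: int
  assumes p: "prime p" and m: "1 < m" "m < p" and "sum_of_four_squares (m * p)"
  obtains r where "0 < r" "r < m" "sum_of_four_squares (r * p)"
proof -
  obtain a b c d where sum: "m * p = a^2 + b^2 + c^2 + d^2"
    using assms(4) unfolding sum_of_four_squares_def by blast
  have not_dvd: "\<not> m dvd p" using p m by (simp add: prime_int_iff')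
  define A B C D where "A = a cmod m" "B = b cmod m" "C = c cmod m" "D = d cmod m"
  have cong: "m dvd a - A" "m dvd b - B" "m dvd c - C" "m dvd d - D"
    unfolding A_B_C_D_def by (simp_all add: minus_cmod_eq_mult_cdiv)
  have small: "4 * A^2 \<le> m^2" "4 * B^2 \<le> m^2" "4 * C^2 \<le> m^2" "4 * D^2 \<le> m^2"
    unfolding A_B_C_D_def using m by (simp_all add: four_times_square_cmod_le)
  have "m dvd A^2 + B^2 + C^2 + D^2"
    using dvd_sum_of_four_squares_of_congruent[OF cong] sum by (metis dvd_triv_left)
  then obtain r where res: "A^2 + B^2 + C^2 + D^2 = m * r" by (elim dvdE)
  have "0 \<le> m * r" unfolding res[symmetric] by simp
  then have "0 \<le> r" using m by (simp add: zero_le_mult_iff)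
  moreover have "4 * (m * r) \<le> 4 * m^2"
    using small unfolding res[symmetric] by simp
  then have "r \<le> m" using m by (simp add: power2_eq_square)
  moreover have "r \<noteq> 0"
  proof
    assume "r = 0"
    then have "A = 0" "B = 0" "C = 0" "D = 0" using res by (auto simp: add_nonneg_eq_0_iff)
    then obtain x y z w where "a = m * x" "b = m * y" "c = m * z" "d = m * w"
      using cong by (auto elim!: dvdE)
    then have "m * p = m * (m * (x^2 + y^2 + z^2 + w^2))"
      using sum by (simp add: power2_eq_square algebra_simps)
    then show False using not_dvd m by simp
  qed
  moreover have "r \<noteq> m"
  proof
    assume "r = m"
    then have "4 * A^2 = m^2" "4 * B^2 = m^2" "4 * C^2 = m^2" "4 * D^2 = m^2"
      using res small by (simp_all add: power2_eq_square)
    then show False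
      using dvd_of_half_modulus_residues[OF _ sum cong] not_dvd m by simp
  qed
  ultimately have "0 < r" "r < m" by auto
  then show thesis
    by (rule that) (use sum_of_four_squares_quotient[OF _ sum res cong] m in simp)
qed

lemma sum_of_four_squares_of_prime_multiple:
  fixes p m :: int
  assumes "prime p" "0 < m" "m < p" "sum_of_four_squares (m * p)"
  shows "sum_of_four_squares p"
  using assms(2-4)
proof (induction "nat m" arbitrary: m rule: less_induct)
  case less
  show ?case
  proof (cases "m = 1")
    case True
    with less.prems show ?thesis by simp
  next
    case False
    with less.prems have "1 < m" by simp
    then obtain r where "0 < r" "r < m" "sum_of_four_squares (r * p)"
      using four_squares_descent[OF assms(1) _ less.prems(2,3)] by blast
    then show ?thesis using less.hyps[of r] less.prems by simp
  qed
qed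

lemma sum_of_four_squares_prime:
  fixes p :: int
  assumes p: "prime p"
  shows "sum_of_four_squares p"
proof (cases "p = 2")
  case True
  then show ?thesis unfolding sum_of_four_squares_def
    by (intro exI[of _ 1] exI[of _ 0]) simp
next
  case False
  then have "odd p" using p prime_ge_2_int[OF p] prime_odd_int[OF p] by simp
  then obtain x y where xy: "0 \<le> x" "2 * x < p" "0 \<le> y" "2 * y < p" "p dvd x^2 + y^2 + 1"
    using odd_prime_dvd_sum_two_squares_plus_one[OF p] by blast
  then obtain m where m: "x^2 + y^2 + 1 = p * m" by (elim dvdE)
  have "p > 0" using prime_gt_0_int[OF p] .
  have "0 < p * m" unfolding m[symmetric] by (simp add: add_nonneg_pos)
  then have "0 < m" using \<open>p > 0\<close> by (simp add: zero_less_mult_iff)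
  moreover have "m < p"
  proof -
    have "(2 * x)^2 < p^2" by (rule power_strict_mono) (use xy in auto)
    moreover have "(2 * y)^2 < p^2" by (rule power_strict_mono) (use xy in auto)
    moreover have "4 \<le> p^2" using power_mono[of 2 p 2] prime_ge_2_int[OF p] by simp
    ultimately have "p * m < p * p" using m by (simp add: power_mult_distrib power2_eq_square)
    then show ?thesis using \<open>p > 0\<close> by simp
  qed
  moreover have "sum_of_four_squares (m * p)" unfolding sum_of_four_squares_def using m
    by (intro exI[of _ x] exI[of _ y] exI[of _ 1] exI[of _ 0]) (simp add: algebra_simps)
  ultimately show ?thesis using sum_of_four_squares_of_prime_multiple[OF p] by blast
qed

theorem sum_of_four_squares_nat: "sum_of_four_squares (int n)"
proof (induction n rule: prime_divisors_induct)
  case zero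
  show ?case unfolding sum_of_four_squares_def by (intro exI[of _ 0]) simp
next
  case (unit n)
  then show ?case unfolding sum_of_four_squares_def by (intro exI[of _ 1] exI[of _ 0]) simp
next
  case (factor p n)
  then show ?case using sum_of_four_squares_mult sum_of_four_squares_prime by simp
qed

lemma E8_pair_from_odd_sum_of_four_squares:
  fixes a b c d :: int
  defines "N \<equiv> a^2 + b^2 + c^2 + d^2"
  assumes "odd N"
  shows "\<exists>v\<in>E8. \<exists>w\<in>E8. E8_form v v = of_int N + 1 \<and> E8_form w w = of_int N + 1
           \<and> E8_form v w = of_int N"
proof -
  define u :: "real^8" where
    "u = of_int a *\<^sub>R axis 3 1 + of_int b *\<^sub>R axis 4 1 + of_int c *\<^sub>R axis 5 1 + of_int d *\<^sub>R axis 6 1"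
  define v where "v = axis 1 1 + u"
  define w where "w = u - axis 2 1"
  have u_integral: "u $ i \<in> \<int>" for i
    unfolding u_def by (simp add: axis_def)
  have sum_axis: "(\<Sum>i\<in>UNIV. axis (k::8) (1::real) $ i) = 1" for k
    by (simp add: axis_def)
  have sum_u: "(\<Sum>i\<in>UNIV. u $ i) = of_int (a + b + c + d)"
    unfolding u_def by (simp add: sum.distrib sum_axis flip: sum_distrib_left)
  have norm_u: "u \<bullet> u = of_int N"
    unfolding u_def N_def by (simp add: inner_add_left inner_add_right inner_axis_axis power2_eq_square)
  have u_orthogonal: "axis 1 1 \<bullet> u = 0" "axis 2 1 \<bullet> u = 0" "u \<bullet> axis 1 1 = 0" "u \<bullet> axis 2 1 = 0"
    unfolding u_def by (simp_all add: inner_add_left inner_add_right inner_axis_axis)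
  from \<open>odd N\<close> have parity: "even (a + b + c + d + 1)" "even (a + b + c + d - 1)"
    unfolding N_def by auto
  obtain k1 where k1: "a + b + c + d + 1 = 2 * k1" using parity(1) by (rule evenE)
  obtain k2 where k2: "a + b + c + d - 1 = 2 * k2" using parity(2) by (rule evenE)
  have "v \<in> E8" unfolding E8_def
  proof (intro CollectI conjI disjI1 allI exI[of _ k1])
    show "v $ i \<in> \<int>" for i using u_integral[of i] unfolding v_def by (simp add: axis_def)
    show "(\<Sum>i\<in>UNIV. v $ i) = 2 * of_int k1"
      unfolding v_def using sum_u arg_cong[OF k1, of real_of_int] by (simp add: sum.distrib sum_axis)
  qed
  moreover have "w \<in> E8" unfolding E8_def
  proof (intro CollectI conjI disjI1 allI exI[of _ k2])
    show "w $ i \<in> \<int>" for i using u_integral[of i] unfolding w_def by (simp add: axis_def)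
    show "(\<Sum>i\<in>UNIV. w $ i) = 2 * of_int k2"
      unfolding w_def using sum_u arg_cong[OF k2, of real_of_int] by (simp add: sum_subtractf sum_axis)
  qed
  moreover have "E8_form v v = of_int N + 1" "E8_form w w = of_int N + 1" "E8_form v w = of_int N"
    unfolding E8_form_def v_def w_def using norm_u u_orthogonal
    by (simp_all add: inner_add_left inner_add_right inner_diff_left inner_diff_right
        inner_axis_axis)
  ultimately show ?thesis by blast
qed

theorem lemma2p2:
  fixes n :: nat
  assumes "n \<ge> 1"
  shows "\<exists>v\<in>E8. \<exists>w\<in>E8. E8_form v v = 2 * real n \<and> E8_form w w = 2 * real n
           \<and> E8_form v w = 2 * real n - 1"
proof -
  have "sum_of_four_squares (int (2 * n - 1))" by (rule sum_of_four_squares_nat)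
  then obtain a b c d :: int where abcd: "a^2 + b^2 + c^2 + d^2 = int (2 * n - 1)"
    unfolding sum_of_four_squares_def by auto
  have "odd (a^2 + b^2 + c^2 + d^2)" unfolding abcd using assms by simp
  moreover have "real_of_int (a^2 + b^2 + c^2 + d^2) = 2 * real n - 1"
    unfolding abcd using assms by simp
  ultimately show ?thesis
    using E8_pair_from_odd_sum_of_four_squares[of a b c d] by simp
qed

end
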